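(* Let $G$ be a finite group and $H$ a subgroup such that $\mathcal{O}_G(H)$ is Boolean of rank $2$ with coatoms $M_1,M_2$. Then $|M_1:H|=2$ if and only if $|G:M_2|=2$.
   Context: $\mathcal{O}_G(H)=\{K\mid H\le K\le G\}$; Boolean of rank $2$ means isomorphic to the lattice of subsets of a $2$-element set; coatoms are the maximal elements of $\mathcal{O}_G(H)\setminus\{G\}$. *)

theory Defs
  imports "HOL-Algebra.Algebra"
begin

definition overgroups :: "('a, 'b) monoid_scheme \<Rightarrow> 'a set \<Rightarrow> 'a set set" where
  "overgroups G H = {K. subgroup K G \<and> H \<subseteq> K}"

definition boolean_rank2 :: "'a set set \<Rightarrow> bool" where
  "boolean_rank2 L \<longleftrightarrow> (\<exists>f. bij_betw f (Pow {0::nat, 1}) L \<and>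
      (\<forall>A\<in>Pow {0::nat, 1}. \<forall>B\<in>Pow {0::nat, 1}. f A \<subseteq> f B \<longleftrightarrow> A \<subseteq> B))"

definition coatoms :: "('a, 'b) monoid_scheme \<Rightarrow> 'a set \<Rightarrow> 'a set set" where
  "coatoms G H = {M \<in> overgroups G H - {carrier G}.
      \<forall>K \<in> overgroups G H - {carrier G}. M \<subseteq> K \<longrightarrow> K = M}"

definition sindex :: "('a, 'b) monoid_scheme \<Rightarrow> 'a set \<Rightarrow> 'a set \<Rightarrow> nat" where
  "sindex G K H = card (rcosets\<^bsub>G\<lparr>carrier := K\<rparr>\<^esub> H)"

end

theory Submission
  imports Defs
begin

text \<open>Both index conditions force the coatom M2 to be normal in G. A subgroup of index 2 is
  normal. If instead |M1 : H| = 2, an element x of M1 - M2 normalizes H, so conjugation by x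
  permutes the four overgroups H, M1, M2, G of H while fixing H, M1 and G; hence it fixes M2,
  and the normalizer of M2 properly contains the coatom M2, so it is G.
  Once M2 is normal, M2 M1 is an overgroup of H properly containing M2, hence equals G, and the
  second isomorphism theorem gives |M1 : H| = |M1 : M1 \<inter> M2| = |M2 M1 : M2| = |G : M2|.\<close>

lemma boolean_rank2_cases:
  assumes "boolean_rank2 L"
    and "B \<in> L" "\<And>K. K \<in> L \<Longrightarrow> B \<subseteq> K"
    and "T \<in> L" "\<And>K. K \<in> L \<Longrightarrow> K \<subseteq> T"
  obtains P Q where "L = {B, P, Q, T}" "B \<subset> P" "B \<subset> Q" "P \<subset> T" "Q \<subset> T"
    "\<not> P \<subseteq> Q" "\<not> Q \<subseteq> P"
proof -
  obtain f where f: "bij_betw f (Pow {0::nat, 1}) L"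
    and mono: "\<forall>A\<in>Pow {0::nat, 1}. \<forall>B\<in>Pow {0::nat, 1}. f A \<subseteq> f B \<longleftrightarrow> A \<subseteq> B"
    using assms(1) unfolding boolean_rank2_def by blast
  have "Pow {0::nat, 1} = {{}, {0}, {1}, {0, 1}}" by (auto simp: Pow_insert)
  then have L: "L = {f {}, f {0}, f {1}, f {0, 1}}" using f by (auto simp: bij_betw_def)
  have iso: "f A \<subseteq> f B \<longleftrightarrow> A \<subseteq> B" if "A \<subseteq> {0, 1}" "B \<subseteq> {0, 1}" for A B
    using mono that by blast
  have bot_top: "f {} \<subseteq> K" "K \<subseteq> f {0, 1}" if "K \<in> L" for K
    using that unfolding L by (elim insertE emptyE; simp add: iso)+
  have "f {} \<in> L" "f {0, 1} \<in> L" using L by simp_all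
  then have bot: "f {} = B" and top: "f {0, 1} = T"
    using bot_top assms(2-5) by (meson subset_antisym)+
  have "L = {B, f {0}, f {1}, T}" using L bot top by simp
  moreover have "B \<subset> f {0}" "B \<subset> f {1}" "f {0} \<subset> T" "f {1} \<subset> T"
    "\<not> f {0} \<subseteq> f {1}" "\<not> f {1} \<subseteq> f {0}"
    unfolding bot[symmetric] top[symmetric] by (simp_all add: less_le_not_le iso)
  ultimately show ?thesis by (rule that)
qed

lemma (in group) index_two_imp_normal:
  assumes H: "subgroup H G" and two: "card (rcosets H) = 2"
  shows "H \<lhd> G"
proof -
  have HG: "H \<subseteq> carrier G" using H by (rule subgroup.subset)
  have coset_eq: "H #> g = H #> g'" if "g \<in> carrier G - H" "g' \<in> carrier G - H" for g g'
  proof -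
    obtain A B where AB: "rcosets H = {A, B}" "A \<noteq> B" using two card_2_iff by metis
    have "H \<in> rcosets H" using rcosetsI[OF HG one_closed] HG by simp
    moreover have "H #> g \<in> rcosets H" "H #> g' \<in> rcosets H" using that HG rcosetsI by auto
    moreover have "H #> g \<noteq> H" "H #> g' \<noteq> H" using that rcos_self[OF _ H] by blast+
    ultimately show ?thesis using AB by auto
  qed
  show ?thesis
    unfolding normal_inv_iff
  proof (intro conjI ballI)
    fix g h assume g: "g \<in> carrier G" and h: "h \<in> H"
    have hG: "h \<in> carrier G" using h HG by blast
    show "g \<otimes> h \<otimes> inv g \<in> H"
    proof (cases "g \<in> H")
      case True
      then show ?thesis using h H by (simp add: subgroup.m_closed subgroup.m_inv_closed)
    next
      case False
      have "g \<otimes> h \<notin> H"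
      proof
        assume "g \<otimes> h \<in> H"
        then have "g \<otimes> h \<otimes> inv h \<in> H" using h H by (simp add: subgroup.m_closed subgroup.m_inv_closed)
        with False g hG show False by (simp add: m_assoc)
      qed
      then have "H #> (g \<otimes> h) = H #> g" using coset_eq[of "g \<otimes> h" g] g hG False by blast
      with rcos_self[OF _ H, of "g \<otimes> h"] have "g \<otimes> h \<in> H #> g" using g hG by simp
      then show ?thesis using subgroup.rcos_module_imp[OF H is_group g] by simp
    qed
  qed (fact H)
qed

lemma (in group) mem_normalizer_iff:
  assumes "H \<subseteq> carrier G"
  shows "g \<in> normalizer G H \<longleftrightarrow> g \<in> carrier G \<and> g <# H #> inv g = H"
  using assms by (auto simp: normalizer_def stabilizer_def)

lemma (in group) subgroup_subset_normalizer:
  assumes "subgroup H G"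
  shows "H \<subseteq> normalizer G H"
  using subgroup_in_normalizer[OF assms] normal_imp_subgroup subgroup.subset by fastforce

lemma (in group) normal_if_normalizer_eq_carrier:
  assumes "subgroup N G" and "normalizer G N = carrier G"
  shows "N \<lhd> G"
  using subgroup_in_normalizer[OF assms(1)] assms(2) by simp

lemma (in group) sindex_set_mult_normal:
  assumes "N \<lhd> G" and "subgroup K G"
  shows "sindex G (N <#> K) N = sindex G K (N \<inter> K)"
  using iso_same_card[OF weak_snd_iso_thme[OF assms(2,1)]] by (simp add: sindex_def FactGroup_def)

locale boolean_overgroup_interval = group G for G (structure) +
  fixes H M1 M2
  assumes overgroups_eq: "overgroups G H = {H, M1, M2, carrier G}"
    and M1_not_subset: "\<not> M1 \<subseteq> M2"
    and M2_not_subset: "\<not> M2 \<subseteq> M1"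
begin

lemma subgroups: "subgroup H G" "subgroup M1 G" "subgroup M2 G"
  and H_subset: "H \<subseteq> M1" "H \<subseteq> M2"
  using overgroups_eq unfolding overgroups_def by blast+

lemma M1_Int_M2: "M1 \<inter> M2 = H"
proof -
  have "M1 \<inter> M2 \<in> overgroups G H"
    using subgroups H_subset by (auto simp: overgroups_def intro: subgroups_Inter_pair)
  then show ?thesis
    using overgroups_eq M1_not_subset M2_not_subset subgroup.subset[OF subgroups(2)] by auto
qed

lemma eq_carrier_if_psubset_M2:
  assumes "subgroup K G" and "M2 \<subset> K"
  shows "K = carrier G"
proof -
  have "K \<in> overgroups G H" using assms H_subset by (auto simp: overgroups_def)
  then show ?thesis using overgroups_eq assms(2) M2_not_subset H_subset by auto
qed

lemma sindex_eq_if_M2_normal: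
  assumes "M2 \<lhd> G"
  shows "sindex G M1 H = sindex G (carrier G) M2"
proof -
  have "M2 <#> M1 = carrier G"
  proof (rule eq_carrier_if_psubset_M2)
    show "subgroup (M2 <#> M1) G" using mult_norm_subgroup[OF assms subgroups(2)] .
    have "M1 \<subseteq> M2 <#> M1" "M2 \<subseteq> M2 <#> M1"
      using subgroup.subset[OF subgroup_of_normal_set_mult[OF assms subgroups(2)]]
        subgroup.subset[OF normal_imp_subgroup[OF normal_in_normal_set_mult[OF assms subgroups(2)]]]
      by simp_all
    then show "M2 \<subset> M2 <#> M1" using M1_not_subset by blast
  qed
  then show ?thesis
    using sindex_set_mult_normal[OF assms subgroups(2)] M1_Int_M2 by (simp add: Int_commute)
qed

lemma M2_normal_if_M1_normalizes_H:
  assumes "M1 \<subseteq> normalizer G H"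
  shows "M2 \<lhd> G"
proof -
  obtain x where x: "x \<in> M1" "x \<notin> M2" using M1_not_subset by blast
  have xG: "x \<in> carrier G" using subgroup.mem_carrier[OF subgroups(2) x(1)] .
  define conjugate where "conjugate S = x <# S #> inv x" for S
  have conjugate_subgroup: "subgroup (conjugate S) G" if "subgroup S G" for S
    using subgroup_conjugation_is_surj1[of "inv x" S] that xG by (simp add: conjugate_def)
  have conjugate_mono: "conjugate S \<subseteq> conjugate T" if "S \<subseteq> T" for S T
    using that unfolding conjugate_def l_coset_def r_coset_def by auto
  have conjugate_inj: "S = T"
    if "conjugate S = conjugate T" "S \<subseteq> carrier G" "T \<subseteq> carrier G" for S T
    using subgroup_conjugation_is_inj[OF xG that(2,3)] that(1) by (simp add: conjugate_def)
  have conjugate_fixed: "conjugate S = S" if "subgroup S G" "x \<in> normalizer G S" for S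
    using that mem_normalizer_iff[OF subgroup.subset[OF that(1)]] by (simp add: conjugate_def)
  have fixed: "conjugate H = H" "conjugate M1 = M1" "conjugate (carrier G) = carrier G"
    using conjugate_fixed[OF subgroups(1)] conjugate_fixed[OF subgroups(2)]
      conjugate_fixed[OF subgroup_self] assms x(1) xG
      subgroup_subset_normalizer[OF subgroups(2)] subgroup_subset_normalizer[OF subgroup_self]
    by auto
  have "conjugate M2 \<in> overgroups G H"
    using conjugate_subgroup[OF subgroups(3)] conjugate_mono[OF H_subset(2)] fixed(1)
    by (simp add: overgroups_def)
  moreover have "conjugate M2 \<noteq> S" if "S \<in> {H, M1, carrier G}" for S
  proof
    assume "conjugate M2 = S"
    then have "conjugate M2 = conjugate S" using that fixed by auto
    moreover have "M2 \<subseteq> carrier G" "S \<subseteq> carrier G"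
      using that subgroups by (auto dest: subgroup.subset)
    ultimately have "M2 = S" by (rule conjugate_inj)
    then show False
      using that M1_not_subset M2_not_subset H_subset subgroup.subset[OF subgroups(2)] by auto
  qed
  ultimately have "conjugate M2 = M2"
    unfolding overgroups_eq by blast
  then have "x \<in> normalizer G M2"
    using mem_normalizer_iff[OF subgroup.subset[OF subgroups(3)]] xG by (simp add: conjugate_def)
  then have "M2 \<subset> normalizer G M2"
    using subgroup_subset_normalizer[OF subgroups(3)] x(2) by blast
  then have "normalizer G M2 = carrier G"
    using eq_carrier_if_psubset_M2 normalizer_imp_subgroup[OF subgroup.subset[OF subgroups(3)]]
    by blast
  then show ?thesis using normal_if_normalizer_eq_carrier[OF subgroups(3)] by blast
qed

theorem sindex_M1_H_eq_two_iff:
  "sindex G M1 H = 2 \<longleftrightarrow> sindex G (carrier G) M2 = 2"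
proof
  assume "sindex G M1 H = 2"
  then have "H \<lhd> G\<lparr>carrier := M1\<rparr>"
    using group.index_two_imp_normal[OF subgroup_imp_group[OF subgroups(2)]]
      subgroup_incl[OF subgroups(1,2) H_subset(1)]
    by (simp add: sindex_def)
  then have "M1 \<subseteq> normalizer G H"
    using subgroup.subset[OF normal_imp_subgroup_normalizer[OF subgroups(2)]] by simp
  then show "sindex G (carrier G) M2 = 2"
    using M2_normal_if_M1_normalizes_H sindex_eq_if_M2_normal \<open>sindex G M1 H = 2\<close> by simp
next
  assume "sindex G (carrier G) M2 = 2"
  then have "M2 \<lhd> G"
    using index_two_imp_normal[OF subgroups(3)] by (simp add: sindex_def)
  then show "sindex G M1 H = 2"
    using sindex_eq_if_M2_normal \<open>sindex G (carrier G) M2 = 2\<close> by simp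
qed

end

lemma (in group) boolean_overgroup_interval_if_boolean_rank2:
  assumes "subgroup H G" and "boolean_rank2 (overgroups G H)"
    and "coatoms G H = {M1, M2}" and "M1 \<noteq> M2"
  shows "boolean_overgroup_interval G H M1 M2"
proof -
  have H_mem: "H \<in> overgroups G H" and carrier_mem: "carrier G \<in> overgroups G H"
    using assms(1) subgroup.subset[OF assms(1)] subgroup_self by (simp_all add: overgroups_def)
  have bounds: "H \<subseteq> K" "K \<subseteq> carrier G" if "K \<in> overgroups G H" for K
    using that unfolding overgroups_def by (auto dest: subgroup.subset)
  obtain P Q where L: "overgroups G H = {H, P, Q, carrier G}"
    and order: "H \<subset> P" "H \<subset> Q" "P \<subset> carrier G" "Q \<subset> carrier G" "\<not> P \<subseteq> Q" "\<not> Q \<subseteq> P"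
    by (rule boolean_rank2_cases[OF assms(2) H_mem bounds(1) carrier_mem bounds(2)])
  have "M = P \<or> M = Q" if "M \<in> coatoms G H" for M
  proof -
    have "P \<in> overgroups G H - {carrier G}" using L order(3) by auto
    moreover have "M \<in> {H, P, Q, carrier G}" "M \<noteq> carrier G"
      and "\<forall>K \<in> overgroups G H - {carrier G}. M \<subseteq> K \<longrightarrow> K = M"
      using that unfolding coatoms_def L by auto
    ultimately show ?thesis using order(1) by blast
  qed
  then have "M1 = P \<and> M2 = Q \<or> M1 = Q \<and> M2 = P"
    using assms(3,4) by blast
  then show ?thesis
  proof (elim disjE conjE)
    assume "M1 = P" "M2 = Q"
    then show ?thesis using L order by unfold_locales simp_all
  next
    assume "M1 = Q" "M2 = P"
    then show ?thesis using L order by unfold_locales (simp_all add: insert_commute)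
  qed
qed

theorem lemma10p7:
  fixes G :: "('a, 'b) monoid_scheme"
  assumes "group G" and "finite (carrier G)" and "subgroup H G"
    and "boolean_rank2 (overgroups G H)"
    and "coatoms G H = {M1, M2}" and "M1 \<noteq> M2"
  shows "sindex G M1 H = 2 \<longleftrightarrow> sindex G (carrier G) M2 = 2"
proof -
  interpret group G by fact
  interpret boolean_overgroup_interval G H M1 M2
    using assms(3-6) by (rule boolean_overgroup_interval_if_boolean_rank2)
  show ?thesis by (rule sindex_M1_H_eq_two_iff)
qed

end
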